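(* Let $G$ be a finite unipotent group scheme over an algebraically closed field $k$ of characteristic $p>0$, and suppose $A=kG$ has generators $u_1,\dots,u_n$ ($n>1$) satisfying Hypothesis H1. Then: (a) The set $\{u_1^{i_1}u_2^{i_2}\cdots u_n^{i_n} : 0\le i_j<p,\ j=1,\dots,n\}$ is a $k$-basis of $A$. (b) For each $s=1,\dots,n$, $J_s=Au_s+Au_{s+1}+\dots+Au_n$ is a two-sided ideal of $A$, and $x\,u_s^{p-1}u_{s+1}^{p-1}\cdots u_n^{p-1}=0$ for every $x\in J_s$. (c) Let $v=a_1u_1+\dots+a_nu_n$ with $a_1,\dots,a_n\in k$ and $a_i\neq 0$ for some $i<n$. If $v^p=0$, then $v^{p-1}u_n^{p-1}\neq 0$ (in particular $v^{p-1}\notin Au_n$), and the subalgebra of $A$ generated by $v$ and $u_n$ is isomorphic to $k[s,t]/(s^p,t^p)$ via $s\mapsto v$, $t\mapsto u_n$ (i.e. to the group algebra of an elementary abelian $p$-group of rank $2$).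
   Context: Hypothesis H1: $G$ is a finite unipotent group scheme and $A=kG$ is generated as a $k$-algebra by elements $u_1,\dots,u_n$, $n>1$, such that (a) $u_i^p=0$ for all $i$; (b) for each $i=1,\dots,n-1$ the image of $u_i$ is central in $A/I_i$, where $I_i$ is the two-sided ideal generated by $u_{i+1},\dots,u_n$; (c) $u_n$ is central in $A$; (d) $\dim_k A=p^n$. *)

theory Defs
  imports Main "HOL-Computational_Algebra.Polynomial"
begin

definition k_algebra :: "('k::field \<Rightarrow> 'a::ring_1 \<Rightarrow> 'a) \<Rightarrow> bool" where
  "k_algebra scale \<longleftrightarrow> vector_space scale \<and>
     (\<forall>c x y. scale c (x * y) = scale c x * y \<and> scale c (x * y) = x * scale c y)"

definition alg_closed_field :: "'k::field itself \<Rightarrow> bool" where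
  "alg_closed_field _ \<longleftrightarrow> (\<forall>q::'k poly. degree q > 0 \<longrightarrow> (\<exists>x. poly q x = 0))"

inductive_set alg_gen :: "('k::field \<Rightarrow> 'a::ring_1 \<Rightarrow> 'a) \<Rightarrow> 'a set \<Rightarrow> 'a set"
  for scale S where
  gen: "x \<in> S \<Longrightarrow> x \<in> alg_gen scale S"
| one: "1 \<in> alg_gen scale S"
| add: "x \<in> alg_gen scale S \<Longrightarrow> y \<in> alg_gen scale S \<Longrightarrow> x + y \<in> alg_gen scale S"
| mult: "x \<in> alg_gen scale S \<Longrightarrow> y \<in> alg_gen scale S \<Longrightarrow> x * y \<in> alg_gen scale S"
| scale: "x \<in> alg_gen scale S \<Longrightarrow> scale c x \<in> alg_gen scale S"

inductive_set ideal_gen :: "'a::ring_1 set \<Rightarrow> 'a set" for S where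
  gen: "x \<in> S \<Longrightarrow> x \<in> ideal_gen S"
| zero: "0 \<in> ideal_gen S"
| add: "x \<in> ideal_gen S \<Longrightarrow> y \<in> ideal_gen S \<Longrightarrow> x + y \<in> ideal_gen S"
| lmult: "x \<in> ideal_gen S \<Longrightarrow> a * x \<in> ideal_gen S"
| rmult: "x \<in> ideal_gen S \<Longrightarrow> x * a \<in> ideal_gen S"

definition two_sided_ideal :: "'a::ring_1 set \<Rightarrow> bool" where
  "two_sided_ideal I \<longleftrightarrow> 0 \<in> I \<and> (\<forall>x\<in>I. \<forall>y\<in>I. x + y \<in> I) \<and>
     (\<forall>x\<in>I. \<forall>a. a * x \<in> I \<and> x * a \<in> I)"

definition H1 :: "('k::field \<Rightarrow> 'a::ring_1 \<Rightarrow> 'a) \<Rightarrow> nat \<Rightarrow> nat \<Rightarrow> (nat \<Rightarrow> 'a) \<Rightarrow> bool" where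
  "H1 scale p n u \<longleftrightarrow>
     n > 1 \<and>
     alg_gen scale (u ` {1..n}) = UNIV \<and>
     (\<forall>i\<in>{1..n}. u i ^ p = 0) \<and>
     (\<forall>i\<in>{1..<n}. \<forall>a. u i * a - a * u i \<in> ideal_gen (u ` {i<..n})) \<and>
     (\<forall>a. u n * a = a * u n) \<and>
     vector_space.dim scale (UNIV :: 'a set) = p ^ n"

definition ord_monomial :: "(nat \<Rightarrow> 'a::ring_1) \<Rightarrow> nat \<Rightarrow> (nat \<Rightarrow> nat) \<Rightarrow> 'a" where
  "ord_monomial u n e = prod_list (map (\<lambda>j. u j ^ e j) [1..<Suc n])"

definition exps :: "nat \<Rightarrow> nat \<Rightarrow> (nat \<Rightarrow> nat) set" where
  "exps p n = {e. \<forall>j. (j \<in> {1..n} \<longrightarrow> e j < p) \<and> (j \<notin> {1..n} \<longrightarrow> e j = 0)}"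

definition Jset :: "(nat \<Rightarrow> 'a::ring_1) \<Rightarrow> nat \<Rightarrow> nat \<Rightarrow> 'a set" where
  "Jset u n s = {x. \<exists>a. x = (\<Sum>j\<in>{s..n}. a j * u j)}"

text \<open>k[s,t] is modelled as ('k poly) poly: the inner variable is s, the outer is t.\<close>
definition var_s :: "'k::field poly poly" where "var_s = [:[:0, 1:]:]"
definition var_t :: "'k::field poly poly" where "var_t = [:0, 1:]"

definition eval2 :: "('k::field \<Rightarrow> 'a::ring_1 \<Rightarrow> 'a) \<Rightarrow> 'a \<Rightarrow> 'a \<Rightarrow> 'k poly poly \<Rightarrow> 'a" where
  "eval2 scale x y f = (\<Sum>j\<le>degree f. \<Sum>i\<le>degree (coeff f j).
       scale (coeff (coeff f j) i) (x ^ i * y ^ j))"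

end

theory Submission
  imports Defs "HOL-Library.FuncSet"
begin

text \<open>Plan.  (a) Ordered monomials u_1^(e 1) ... u_n^(e n), 0 \<le> e j < p, span A: by induction on s,
  A = span(ordered monomials in u_1, ..., u_(s-1)) + J_s, where J_s = A u_s + ... + A u_n is a
  two-sided ideal (descending induction on s using the H1 commutation hypothesis).  There are
  p^n such monomials and dim A = p^n, so they form a basis and are pairwise distinct.
  (b) J_s annihilates u_s^(p-1) ... u_n^(p-1) from the left, again by descending induction on s.
  (c) If m is the least index with a_m \<noteq> 0, then v^(p-1) \<equiv> a_m^(p-1) u_m^(p-1) modulo
  J_(m+1); multiplying by u_(m+1)^(p-1) ... u_n^(p-1) and using (b) gives the nonzero basis
  vector a_m^(p-1) u_m^(p-1) ... u_n^(p-1), so v^(p-1) u_n^(p-1) \<noteq> 0.  A general lemma on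
  commuting x, y with x^p = y^p = 0 \<noteq> x^(p-1) y^(p-1) then identifies k[x, y] with
  k[s,t]/(s^p, t^p).\<close>

definition peval :: "('c::zero \<Rightarrow> 'a::ring_1) \<Rightarrow> 'a \<Rightarrow> 'c poly \<Rightarrow> 'a" where
  "peval \<psi> z q = (\<Sum>i\<le>degree q. \<psi> (coeff q i) * z ^ i)"

lemma peval_lessThan:
  assumes "\<psi> 0 = 0" "degree q < N"
  shows "peval \<psi> z q = (\<Sum>i<N. \<psi> (coeff q i) * z ^ i)"
  unfolding peval_def
  by (rule sum.mono_neutral_left) (use assms in \<open>auto simp: coeff_eq_0\<close>)

lemma peval_0: "\<psi> 0 = 0 \<Longrightarrow> peval \<psi> z 0 = 0"
  unfolding peval_def by simp

lemma peval_const: "peval \<psi> z [:c:] = \<psi> c"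
  unfolding peval_def by simp

lemma peval_pCons:
  assumes "\<psi> 0 = 0"
  shows "peval \<psi> z (pCons a q) = \<psi> a + peval \<psi> z q * z"
proof -
  define N where "N = Suc (degree q)"
  have "degree (pCons a q) < Suc N" using degree_pCons_le[of a q] unfolding N_def by simp
  then have "peval \<psi> z (pCons a q) = (\<Sum>i<Suc N. \<psi> (coeff (pCons a q) i) * z ^ i)"
    by (rule peval_lessThan[of \<psi>, OF assms])
  also have "\<dots> = \<psi> a + (\<Sum>i<N. \<psi> (coeff q i) * z ^ i) * z"
    by (simp add: sum.lessThan_Suc_shift sum_distrib_right mult.assoc power_Suc2
             del: power_Suc sum.lessThan_Suc)
  also have "(\<Sum>i<N. \<psi> (coeff q i) * z ^ i) = peval \<psi> z q"
    by (rule peval_lessThan[of \<psi>, OF assms, symmetric]) (simp add: N_def)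
  finally show ?thesis .
qed

lemma peval_add:
  assumes zero: "\<psi> 0 = 0" and add: "\<And>c d. \<psi> (c + d) = \<psi> c + \<psi> d"
  shows "peval \<psi> z ((q::'c::comm_monoid_add poly) + r) = peval \<psi> z q + peval \<psi> z r"
proof -
  define N where "N = Suc (max (degree q) (degree r))"
  have "degree (q + r) < N" using degree_add_le_max[of q r] unfolding N_def by simp
  moreover have "degree q < N" "degree r < N" unfolding N_def by auto
  ultimately show ?thesis
    by (simp add: peval_lessThan[of \<psi>, OF zero] add distrib_right sum.distrib)
qed

lemma peval_smult:
  assumes zero: "\<psi> 0 = 0" and mult: "\<And>c d. \<psi> (c * d) = \<psi> c * \<psi> d"
  shows "peval \<psi> z (smult c (q::'c::comm_semiring_0 poly)) = \<psi> c * peval \<psi> z q"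
proof -
  have "degree (smult c q) < Suc (degree q)" using degree_smult_le[of c q] by simp
  then show ?thesis
    by (simp add: peval_lessThan[where \<psi>=\<psi> and N="Suc (degree q)", OF zero] mult sum_distrib_left mult.assoc
             del: sum.lessThan_Suc)
qed

lemma peval_commute:
  assumes zero: "\<psi> 0 = 0" and coeffs: "\<And>c. w * \<psi> c = \<psi> c * w" and wz: "w * z = z * w"
  shows "w * peval \<psi> z q = peval \<psi> z q * w"
proof (induction q)
  case 0 then show ?case by (simp add: peval_0[of \<psi>, OF zero])
next
  case (pCons a q)
  have "w * peval \<psi> z (pCons a q) = \<psi> a * w + peval \<psi> z q * (w * z)"
    by (simp add: peval_pCons[of \<psi>, OF zero] distrib_left coeffs flip: pCons.IH mult.assoc)
  also have "\<dots> = peval \<psi> z (pCons a q) * w"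
    by (simp add: peval_pCons[of \<psi>, OF zero] wz distrib_right mult.assoc)
  finally show ?case .
qed

lemma peval_mult:
  assumes zero: "\<psi> 0 = 0" and add: "\<And>c d. \<psi> (c + d) = \<psi> c + \<psi> d"
    and mult: "\<And>c d. \<psi> (c * d) = \<psi> c * \<psi> d" and coeffs: "\<And>c. z * \<psi> c = \<psi> c * z"
  shows "peval \<psi> z ((q::'c::comm_ring_1 poly) * r) = peval \<psi> z q * peval \<psi> z r"
proof (induction q)
  case 0 then show ?case by (simp add: peval_0[of \<psi>, OF zero])
next
  case (pCons b q)
  have zr: "z * peval \<psi> z r = peval \<psi> z r * z" by (rule peval_commute[of \<psi>, OF zero coeffs]) simp
  have "peval \<psi> z (pCons b q * r) = \<psi> b * peval \<psi> z r + peval \<psi> z q * (z * peval \<psi> z r)"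
    by (simp add: zero peval_add[of \<psi>, OF zero add] peval_smult[of \<psi>, OF zero mult]
        peval_pCons[of \<psi>, OF zero] pCons.IH zr mult.assoc)
  also have "\<dots> = peval \<psi> z (pCons b q) * peval \<psi> z r"
    by (simp add: peval_pCons[of \<psi>, OF zero] distrib_right mult.assoc)
  finally show ?case .
qed

text \<open>Monomials of k[s,t] = k[s][t]: c s^i t^j is monom (monom c i) j.  Multiplying by
  s^p or t^p shifts the corresponding exponent.\<close>
lemma var_s_power: "(var_s :: 'k::field poly poly) ^ k = [:monom 1 k:]"
  unfolding var_s_def by (simp add: poly_const_pow monom_altdef)

lemma var_t_power: "(var_t :: 'k::field poly poly) ^ k = monom 1 k"
  unfolding var_t_def by (simp add: monom_altdef)

lemma monom2_factor: "monom (monom (c::'k::field) i) j = [:[:c:]:] * var_s ^ i * var_t ^ j"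
  by (simp add: var_s_power var_t_power smult_monom mult_monom flip: monom_0)

lemma monom2_shift_s: "monom (monom (c::'k::field) (i + p)) j = var_s ^ p * monom (monom c i) j"
  by (simp add: var_s_power smult_monom mult_monom add.commute)

lemma monom2_shift_t: "monom (monom (c::'k::field) i) (j + p) = var_t ^ p * monom (monom c i) j"
  by (simp add: var_t_power mult_monom add.commute)

lemma ideal_gen_sum:
  "finite A \<Longrightarrow> (\<And>i. i \<in> A \<Longrightarrow> f i \<in> ideal_gen S) \<Longrightarrow> sum f A \<in> ideal_gen S"
  by (induction A rule: finite_induct) (auto intro: ideal_gen.intros)

lemma monom2_in_ideal:
  assumes "p \<le> i \<or> p \<le> j"
  shows "monom (monom (c::'k::field) i) j \<in> ideal_gen {var_s ^ p, var_t ^ p}"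
proof -
  have "monom (monom c i) j = var_s ^ p * monom (monom c (i - p)) j
      \<or> monom (monom c i) j = var_t ^ p * monom (monom c i) (j - p)"
    using assms monom2_shift_s[of c "i - p" p j] monom2_shift_t[of c i "j - p" p] by auto
  then show ?thesis by (elim disjE) (simp_all add: ideal_gen.rmult ideal_gen.gen)
qed

lemma poly2_monomial_expansion:
  fixes f :: "'k::field poly poly"
  obtains N where "M \<le> N" "f = (\<Sum>j\<le>N. \<Sum>i\<le>N. monom (monom (coeff (coeff f j) i) i) j)"
proof
  define N where "N = degree f + (\<Sum>j\<le>degree f. degree (coeff f j)) + M"
  show "M \<le> N" unfolding N_def by simp
  have deg_coeff: "degree (coeff f j) \<le> N" for j
  proof (cases "j \<le> degree f")
    case True
    then have "degree (coeff f j) \<le> (\<Sum>j\<le>degree f. degree (coeff f j))"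
      by (intro member_le_sum) auto
    then show ?thesis unfolding N_def by simp
  qed (simp add: coeff_eq_0)
  have "f = (\<Sum>j\<le>N. monom (coeff f j) j)"
    by (rule poly_as_sum_of_monoms'[symmetric]) (simp add: N_def)
  also have "\<dots> = (\<Sum>j\<le>N. \<Sum>i\<le>N. monom (monom (coeff (coeff f j) i) i) j)"
    by (simp only: poly_as_sum_of_monoms'[OF deg_coeff] flip: monom_sum)
  finally show "f = \<dots>" .
qed

lemma power_vanishes: "(z::'a::semiring_1) ^ p = 0 \<Longrightarrow> p \<le> a \<Longrightarrow> z ^ a = 0"
  by (metis le_add_diff_inverse mult_zero_left power_add)

lemma lex_least_pair:
  fixes Q :: "nat \<Rightarrow> nat \<Rightarrow> bool"
  assumes "Q i j"
  obtains i0 j0 where "Q i0 j0" "\<And>i j. Q i j \<Longrightarrow> i0 < i \<or> (i0 = i \<and> j0 \<le> j)"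
proof -
  define i0 where "i0 = (LEAST i. \<exists>j. Q i j)"
  define j0 where "j0 = (LEAST j. Q i0 j)"
  have "\<exists>i j. Q i j" using assms by blast
  then have "\<exists>j. Q i0 j" unfolding i0_def by (rule LeastI_ex)
  then have "Q i0 j0" unfolding j0_def by (rule LeastI_ex)
  moreover have "i0 < i \<or> (i0 = i \<and> j0 \<le> j)" if Qij: "Q i j" for i j
  proof -
    have "i0 \<le> i" unfolding i0_def using Qij by (intro Least_le) blast
    moreover have "j0 \<le> j" if "i0 = i" unfolding j0_def using Qij that by (intro Least_le) simp
    ultimately show ?thesis by linarith
  qed
  ultimately show ?thesis using that by blast
qed

locale k_alg = vector_space scale for scale :: "'k::field \<Rightarrow> 'a::ring_1 \<Rightarrow> 'a" +
  assumes scale_mult_left: "\<And>c x y. scale c (x * y) = scale c x * y"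
    and scale_mult_right: "\<And>c x y. scale c (x * y) = x * scale c y"

lemma k_algebra_imp_k_alg: "k_algebra scale \<Longrightarrow> k_alg scale"
  unfolding k_algebra_def k_alg_def k_alg_axioms_def by blast

context k_alg
begin

lemma scale_as_left_mult: "scale c x = scale c 1 * x"
  using scale_mult_left[of c 1 x] by simp

lemma scale_as_right_mult: "scale c x = x * scale c 1"
  using scale_mult_right[of c x 1] by simp

lemma scalar_central: "scale c 1 * x = x * scale c 1"
  by (simp flip: scale_as_left_mult scale_as_right_mult)

lemma scalar_mult: "scale (c * d) 1 = scale c 1 * scale d 1"
  by (simp flip: scale_as_left_mult)

lemma scale_times_scale: "scale c x * scale d y = scale (c * d) (x * y)"
  by (simp flip: scale_mult_left scale_mult_right)

lemma alg_gen_zero: "0 \<in> alg_gen scale S"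
proof -
  have "scale 0 1 \<in> alg_gen scale S" by (intro alg_gen.scale alg_gen.one)
  then show ?thesis by simp
qed

lemma alg_gen_sum:
  "finite A \<Longrightarrow> (\<And>i. i \<in> A \<Longrightarrow> f i \<in> alg_gen scale S) \<Longrightarrow> sum f A \<in> alg_gen scale S"
  by (induction A rule: finite_induct) (auto intro: alg_gen.intros alg_gen_zero)

lemma alg_gen_power: "x \<in> alg_gen scale S \<Longrightarrow> x ^ k \<in> alg_gen scale S"
  by (induction k) (auto intro: alg_gen.intros)

definition eval1 :: "'a \<Rightarrow> 'k poly \<Rightarrow> 'a" where
  "eval1 x = peval (\<lambda>c. scale c 1) x"

lemma eval1_0: "eval1 x 0 = 0"
  unfolding eval1_def by (simp add: peval_0)

lemma eval1_1: "eval1 x 1 = 1"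
  unfolding eval1_def peval_def by simp

lemma eval1_const: "eval1 x [:c:] = scale c 1"
  unfolding eval1_def by (simp add: peval_const)

lemma eval1_X: "eval1 x [:0, 1:] = x"
  unfolding eval1_def by (simp add: peval_pCons peval_const)

lemma eval1_add: "eval1 x (q + r) = eval1 x q + eval1 x r"
  unfolding eval1_def by (rule peval_add) (simp_all add: scale_left_distrib)

lemma eval1_mult: "eval1 x (q * r) = eval1 x q * eval1 x r"
  unfolding eval1_def
  by (rule peval_mult) (simp, rule scale_left_distrib, rule scalar_mult, rule scalar_central[symmetric])

lemma eval1_commute: "w * x = x * w \<Longrightarrow> w * eval1 x q = eval1 x q * w"
  unfolding eval1_def by (rule peval_commute) (simp, rule scalar_central[symmetric])

lemma eval2_peval: "eval2 scale x y = peval (eval1 x) y"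
proof
  fix f
  have "scale (coeff (coeff f j) i) (x ^ i * y ^ j) = scale (coeff (coeff f j) i) 1 * x ^ i * y ^ j"
    for i j by (simp add: scale_as_left_mult[of _ "x ^ i * y ^ j"] mult.assoc)
  then show "eval2 scale x y f = peval (eval1 x) y f"
    unfolding eval2_def peval_def eval1_def by (simp add: sum_distrib_right)
qed

lemma eval2_0: "eval2 scale x y 0 = 0"
  by (simp add: eval2_peval peval_0 eval1_0)

lemma eval2_const: "eval2 scale x y [:[:c:]:] = scale c 1"
  by (simp add: eval2_peval peval_const eval1_const)

lemma eval2_add: "eval2 scale x y (f + g) = eval2 scale x y f + eval2 scale x y g"
  unfolding eval2_peval by (rule peval_add) (simp_all add: eval1_0 eval1_add)

lemma eval2_1: "eval2 scale x y 1 = 1"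
  unfolding eval2_peval by (simp add: peval_def eval1_1)

lemma eval2_var_s: "eval2 scale x y var_s = x"
  unfolding eval2_peval var_s_def by (simp add: peval_const eval1_X)

lemma eval2_var_t: "eval2 scale x y var_t = y"
  unfolding eval2_peval var_t_def by (simp add: peval_pCons peval_const eval1_0 eval1_1)

lemma eval2_sum: "eval2 scale x y (sum f A) = (\<Sum>a\<in>A. eval2 scale x y (f a))"
  by (induction A rule: infinite_finite_induct) (simp_all add: eval2_0 eval2_add)

context
  fixes x y :: 'a
  assumes xy: "x * y = y * x"
begin

lemma eval2_mult: "eval2 scale x y (f * g) = eval2 scale x y f * eval2 scale x y g"
  unfolding eval2_peval
  by (rule peval_mult) (simp_all add: eval1_0 eval1_add eval1_mult eval1_commute[OF xy[symmetric]])

lemma monomial_mult: "x ^ i * y ^ j * (x ^ a * y ^ b) = x ^ (i + a) * y ^ (j + b)"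
proof -
  have "y ^ j * x ^ a = x ^ a * y ^ j" by (metis power_commuting_commutes xy)
  then have "x ^ i * (y ^ j * x ^ a) * y ^ b = x ^ i * (x ^ a * y ^ j) * y ^ b" by simp
  then show ?thesis by (simp add: power_add mult.assoc)
qed

lemma eval2_power: "eval2 scale x y (f ^ k) = eval2 scale x y f ^ k"
  by (induction k) (simp_all add: eval2_1 eval2_mult)

lemma eval2_monom: "eval2 scale x y (monom (monom c i) j) = scale c (x ^ i * y ^ j)"
proof -
  have "eval2 scale x y (monom (monom c i) j) = scale c 1 * (x ^ i * y ^ j)"
    by (simp only: monom2_factor eval2_mult eval2_const eval2_power eval2_var_s eval2_var_t mult.assoc)
  then show ?thesis by (simp only: scale_as_left_mult[of c "x ^ i * y ^ j", symmetric])
qed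

lemma eval2_range: "range (eval2 scale x y) = alg_gen scale {x, y}"
proof
  show "range (eval2 scale x y) \<subseteq> alg_gen scale {x, y}"
    unfolding eval2_def
    by (auto intro!: alg_gen_sum alg_gen.scale alg_gen.mult alg_gen_power intro: alg_gen.gen)
next
  show "alg_gen scale {x, y} \<subseteq> range (eval2 scale x y)"
  proof
    fix w assume "w \<in> alg_gen scale {x, y}"
    then show "w \<in> range (eval2 scale x y)"
    proof (induction rule: alg_gen.induct)
      case (gen w)
      then show ?case using eval2_var_s eval2_var_t by (metis insert_iff rangeI singletonD)
    next
      case one
      show ?case using eval2_1 by (metis rangeI)
    next
      case (add a b)
      then obtain f g where "a = eval2 scale x y f" "b = eval2 scale x y g" by blast
      then show ?case using eval2_add[of x y f g] by (metis rangeI)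
    next
      case (mult a b)
      then obtain f g where "a = eval2 scale x y f" "b = eval2 scale x y g" by blast
      then show ?case using eval2_mult[of f g] by (metis rangeI)
    next
      case (scale a c)
      then obtain f where "a = eval2 scale x y f" by blast
      then have "scale c a = eval2 scale x y ([:[:c:]:] * f)"
        by (simp only: eval2_mult eval2_const) (rule scale_as_left_mult)
      then show ?case by (metis rangeI)
    qed
  qed
qed

end

context
  fixes x y :: 'a and p :: nat
  assumes xy: "x * y = y * x" and x_nilpotent: "x ^ p = 0" and y_nilpotent: "y ^ p = 0"
    and top_nonzero: "x ^ (p - 1) * y ^ (p - 1) \<noteq> 0"
begin

text \<open>Multiplying by x^(p-1-i0) y^(p-1-j0) for the lexicographically least nonzero
  coefficient (i0, j0) isolates that coefficient in front of x^(p-1) y^(p-1).\<close>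
lemma truncated_monomials_independent:
  assumes zero: "(\<Sum>j<p. \<Sum>i<p. scale (c j i) (x ^ i * y ^ j)) = 0" and "i < p" "j < p"
  shows "c j i = 0"
proof (rule ccontr)
  assume "c j i \<noteq> 0"
  then obtain i0 j0 where nz0: "i0 < p \<and> j0 < p \<and> c j0 i0 \<noteq> 0"
    and least: "\<And>i' j'. i' < p \<and> j' < p \<and> c j' i' \<noteq> 0 \<Longrightarrow> i0 < i' \<or> (i0 = i' \<and> j0 \<le> j')"
    using lex_least_pair[of "\<lambda>i' j'. i' < p \<and> j' < p \<and> c j' i' \<noteq> 0" i j] assms(2,3) by blast
  define m where "m = x ^ (p - 1 - i0) * y ^ (p - 1 - j0)"
  define top where "top = scale (c j0 i0) (x ^ (p - 1) * y ^ (p - 1))"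
  have isolated: "scale (c j' i') (x ^ i' * y ^ j') * m = (if i' = i0 then if j' = j0 then top else 0 else 0)"
    if "i' < p" "j' < p" for i' j'
  proof (cases "c j' i' = 0")
    case True
    then show ?thesis using nz0 by auto
  next
    case False
    then have lex: "i0 < i' \<or> (i0 = i' \<and> j0 \<le> j')" using least that by blast
    have prod: "scale (c j' i') (x ^ i' * y ^ j') * m
        = scale (c j' i') (x ^ (i' + (p - 1 - i0)) * y ^ (j' + (p - 1 - j0)))"
      unfolding m_def by (simp add: monomial_mult[OF xy] flip: scale_mult_left)
    consider "i0 < i'" | "i0 = i'" "j0 < j'" | "i0 = i'" "j0 = j'" using lex by linarith
    then show ?thesis
    proof cases
      case 1
      then show ?thesis using nz0 prod power_vanishes[OF x_nilpotent, of "i' + (p - 1 - i0)"] by auto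
    next
      case 2
      then show ?thesis using nz0 prod power_vanishes[OF y_nilpotent, of "j' + (p - 1 - j0)"] by auto
    next
      case 3
      then show ?thesis using nz0 prod by (simp add: top_def)
    qed
  qed
  have "0 = (\<Sum>j<p. \<Sum>i<p. scale (c j i) (x ^ i * y ^ j)) * m" using zero by simp
  also have "\<dots> = (\<Sum>j'<p. \<Sum>i'<p. if i' = i0 then if j' = j0 then top else 0 else 0)"
    by (simp add: sum_distrib_right isolated)
  also have "\<dots> = top" using nz0 by simp
  finally show False using nz0 top_nonzero by (simp add: top_def)
qed

lemma eval2_vanishes_on_ideal: "f \<in> ideal_gen {var_s ^ p, var_t ^ p} \<Longrightarrow> eval2 scale x y f = 0"
proof (induction rule: ideal_gen.induct)
  case (gen w)
  then show ?case
    using x_nilpotent y_nilpotent by (auto simp: eval2_power[OF xy] eval2_var_s eval2_var_t)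
qed (simp_all add: eval2_0 eval2_add eval2_mult[OF xy])

text \<open>Conversely, split f into its monomials with both exponents below p and the rest; the rest
  lies in (s^p, t^p), so the first part evaluates to zero and vanishes by independence.\<close>
lemma eval2_kernel: "{f. eval2 scale x y f = 0} = ideal_gen {var_s ^ p, var_t ^ p}"
proof
  show "ideal_gen {var_s ^ p, var_t ^ p} \<subseteq> {f. eval2 scale x y f = 0}"
    using eval2_vanishes_on_ideal by blast
next
  show "{f. eval2 scale x y f = 0} \<subseteq> ideal_gen {var_s ^ p, var_t ^ p}"
  proof
    fix f assume "f \<in> {f. eval2 scale x y f = 0}"
    then have f0: "eval2 scale x y f = 0" by simp
    define M where "M = (\<lambda>(j, i). monom (monom (coeff (coeff f j) i) i) j)"
    obtain N where pN: "p \<le> N" and expansion: "f = (\<Sum>j\<le>N. \<Sum>i\<le>N. M (j, i))"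
      using poly2_monomial_expansion[of p f] unfolding M_def by auto
    define Low where "Low = {..<p} \<times> {..<p}"
    define High where "High = {..N} \<times> {..N} - Low"
    have "f = sum M ({..N} \<times> {..N})"
      by (simp add: expansion sum.cartesian_product)
    also have "\<dots> = sum M High + sum M Low"
      unfolding High_def Low_def using pN by (intro sum.subset_diff) auto
    finally have f_split: "f = sum M High + sum M Low" .
    have high: "sum M High \<in> ideal_gen {var_s ^ p, var_t ^ p}"
      unfolding High_def Low_def M_def
      by (intro ideal_gen_sum) (auto intro!: monom2_in_ideal simp: not_less)
    have "eval2 scale x y (sum M Low) = 0"
      using f0 eval2_vanishes_on_ideal[OF high] f_split eval2_add by (metis add_0)
    then have "(\<Sum>j<p. \<Sum>i<p. scale (coeff (coeff f j) i) (x ^ i * y ^ j)) = 0"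
      by (simp add: Low_def M_def eval2_sum eval2_monom[OF xy] flip: sum.cartesian_product)
    then have "sum M Low = 0"
      unfolding Low_def M_def using truncated_monomials_independent by (auto intro!: sum.neutral)
    then show "f \<in> ideal_gen {var_s ^ p, var_t ^ p}" using f_split high by simp
  qed
qed

end

end

lemma exps_finite_card: "finite (exps p n) \<and> card (exps p n) = p ^ n"
proof -
  have "bij_betw (\<lambda>e. restrict e {1..n}) (exps p n) (PiE {1..n} (\<lambda>_. {..<p}))"
  proof (rule bij_betw_byWitness[where f' = "\<lambda>f j. if j \<in> {1..n} then f j else 0"])
    show "\<forall>e\<in>exps p n. (\<lambda>j. if j \<in> {1..n} then restrict e {1..n} j else 0) = e"
      unfolding exps_def by (auto simp: fun_eq_iff)
    show "\<forall>f\<in>PiE {1..n} (\<lambda>_. {..<p}). restrict (\<lambda>j. if j \<in> {1..n} then f j else 0) {1..n} = f"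
      by (auto simp: fun_eq_iff PiE_def extensional_def)
    show "(\<lambda>e. restrict e {1..n}) ` exps p n \<subseteq> PiE {1..n} (\<lambda>_. {..<p})"
      unfolding exps_def by auto
    show "(\<lambda>f j. if j \<in> {1..n} then f j else 0) ` PiE {1..n} (\<lambda>_. {..<p}) \<subseteq> exps p n"
      unfolding exps_def by (auto simp: PiE_def)
  qed
  moreover have "finite (PiE {1..n} (\<lambda>_. {..<p}))" by (intro finite_PiE) auto
  moreover have "card (PiE {1..n} (\<lambda>_. {..<p})) = p ^ n" by (simp add: card_PiE)
  ultimately show ?thesis using bij_betw_finite bij_betw_same_card by metis
qed

lemma JsetI: "x = (\<Sum>j\<in>{s..n}. a j * u j) \<Longrightarrow> x \<in> Jset u n s"
  unfolding Jset_def by blast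

lemma Jset_zero: "0 \<in> Jset u n s"
  by (rule JsetI[where a="\<lambda>_. 0"]) simp

lemma Jset_add: "x \<in> Jset u n s \<Longrightarrow> y \<in> Jset u n s \<Longrightarrow> x + y \<in> Jset u n s"
  unfolding Jset_def by (auto intro: exI[of _ "\<lambda>j. _ j + _ j"] simp: sum.distrib distrib_right)

lemma Jset_lmult: "x \<in> Jset u n s \<Longrightarrow> c * x \<in> Jset u n s"
  unfolding Jset_def by (auto intro: exI[of _ "\<lambda>j. c * _ j"] simp: sum_distrib_left mult.assoc)

lemma Jset_sum: "finite A \<Longrightarrow> (\<And>i. i \<in> A \<Longrightarrow> f i \<in> Jset u n s) \<Longrightarrow> sum f A \<in> Jset u n s"
  by (induction A rule: finite_induct) (auto intro: Jset_zero Jset_add)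

lemma Jset_gen: "j \<in> {s..n} \<Longrightarrow> u j \<in> Jset u n s"
  by (rule JsetI[where a="\<lambda>i. if i = j then 1 else 0"]) (simp add: if_distrib[of "\<lambda>c. c * _"] cong: if_cong)

lemma Jset_empty: "n < s \<Longrightarrow> Jset u n s = {0}"
  unfolding Jset_def by auto

lemma Jset_split:
  assumes "s \<le> n"
  shows "x \<in> Jset u n s \<longleftrightarrow> (\<exists>b z. z \<in> Jset u n (Suc s) \<and> x = b * u s + z)"
proof
  assume "x \<in> Jset u n s"
  then obtain a where x: "x = (\<Sum>j\<in>{s..n}. a j * u j)" unfolding Jset_def by blast
  then have "x = a s * u s + (\<Sum>j\<in>{Suc s..n}. a j * u j)"
    using assms by (simp add: sum.atLeast_Suc_atMost)
  then show "\<exists>b z. z \<in> Jset u n (Suc s) \<and> x = b * u s + z" unfolding Jset_def by blast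
next
  assume "\<exists>b z. z \<in> Jset u n (Suc s) \<and> x = b * u s + z"
  then obtain b a where x: "x = b * u s + (\<Sum>j\<in>{Suc s..n}. a j * u j)" unfolding Jset_def by blast
  have "(\<Sum>j\<in>{Suc s..n}. (a(s := b)) j * u j) = (\<Sum>j\<in>{Suc s..n}. a j * u j)"
    by (rule sum.cong) auto
  then have "x = (\<Sum>j\<in>{s..n}. (a(s := b)) j * u j)"
    using x assms by (simp add: sum.atLeast_Suc_atMost)
  then show "x \<in> Jset u n s" by (rule JsetI)
qed

lemma Jset_Suc_subset: "Jset u n (Suc s) \<subseteq> Jset u n s"
proof
  fix z assume z: "z \<in> Jset u n (Suc s)"
  show "z \<in> Jset u n s"
  proof (cases "s \<le> n")
    case True
    then show ?thesis using z by (simp add: Jset_split) (metis add_0 mult_zero_left)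
  qed (use z in \<open>simp add: Jset_empty\<close>)
qed

lemma ideal_gen_least: "two_sided_ideal I \<Longrightarrow> S \<subseteq> I \<Longrightarrow> ideal_gen S \<subseteq> I"
proof
  fix x assume I: "two_sided_ideal I" and S: "S \<subseteq> I" and "x \<in> ideal_gen S"
  from \<open>x \<in> ideal_gen S\<close> show "x \<in> I"
    by (induction rule: ideal_gen.induct) (use I S in \<open>auto simp: two_sided_ideal_def\<close>)
qed

locale H1_algebra = k_alg scale for scale :: "'k::field \<Rightarrow> 'a::ring_1 \<Rightarrow> 'a" +
  fixes p n :: nat and u :: "nat \<Rightarrow> 'a"
  assumes p_ge_2: "2 \<le> p" and H1: "H1 scale p n u"
begin

lemma n_gt_1: "1 < n"
  using H1 unfolding H1_def by simp

lemma generated: "alg_gen scale (u ` {1..n}) = UNIV"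
  using H1 unfolding H1_def by simp

lemma u_nilpotent: "i \<in> {1..n} \<Longrightarrow> u i ^ p = 0"
  using H1 unfolding H1_def by simp

lemma u_commutator: "i \<in> {1..<n} \<Longrightarrow> u i * c - c * u i \<in> ideal_gen (u ` {i<..n})"
  using H1 unfolding H1_def by blast

lemma u_n_central: "u n * c = c * u n"
  using H1 unfolding H1_def by simp

lemma dim_A: "dim (UNIV :: 'a set) = p ^ n"
  using H1 unfolding H1_def by simp

lemma u_times_top_power: "i \<in> {1..n} \<Longrightarrow> u i * u i ^ (p - 1) = 0"
  using u_nilpotent p_ge_2 by (metis Suc_diff_1 less_le_trans pos2 power_Suc)

lemma u_commutes_mod_Jset:
  assumes ideal: "two_sided_ideal (Jset u n (Suc s))" and "1 \<le> s" and j: "j \<in> {s..n}"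
  shows "u j * c - c * u j \<in> Jset u n (Suc s)"
proof (cases "j = n")
  case True
  then show ?thesis using u_n_central Jset_zero by simp
next
  case False
  then have "u j * c - c * u j \<in> ideal_gen (u ` {j<..n})"
    using j \<open>1 \<le> s\<close> by (intro u_commutator) auto
  moreover have "ideal_gen (u ` {j<..n}) \<subseteq> Jset u n (Suc s)"
    using j by (intro ideal_gen_least[OF ideal]) (auto intro!: Jset_gen)
  ultimately show ?thesis by blast
qed

lemma Jset_two_sided_ideal: "1 \<le> s \<Longrightarrow> two_sided_ideal (Jset u n s)"
proof (induction "Suc n - s" arbitrary: s rule: less_induct)
  case less
  show ?case
  proof (cases "n < s")
    case True
    then show ?thesis by (simp add: Jset_empty two_sided_ideal_def)
  next
    case False
    have ideal: "two_sided_ideal (Jset u n (Suc s))" using less False by (intro less.hyps) auto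
    have "x * c \<in> Jset u n s" if x_in: "x \<in> Jset u n s" for x c
    proof -
      obtain a where x: "x = (\<Sum>j\<in>{s..n}. a j * u j)" using x_in unfolding Jset_def by blast
      have "a j * u j * c \<in> Jset u n s" if j: "j \<in> {s..n}" for j
      proof -
        have "a j * u j * c = (a j * c) * u j + a j * (u j * c - c * u j)"
          by (simp add: algebra_simps)
        moreover have "a j * (u j * c - c * u j) \<in> Jset u n s"
          using u_commutes_mod_Jset[OF ideal less.prems j] Jset_Suc_subset by (blast intro: Jset_lmult)
        ultimately show ?thesis using j by (simp add: Jset_add Jset_lmult Jset_gen)
      qed
      then show ?thesis unfolding x sum_distrib_right by (intro Jset_sum) auto
    qed
    then show ?thesis
      unfolding two_sided_ideal_def by (auto intro: Jset_zero Jset_add Jset_lmult)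
  qed
qed

lemma Jset_rmult: "1 \<le> s \<Longrightarrow> x \<in> Jset u n s \<Longrightarrow> x * c \<in> Jset u n s"
  using Jset_two_sided_ideal unfolding two_sided_ideal_def by blast

definition top_monomial :: "nat \<Rightarrow> 'a" where
  "top_monomial s = prod_list (map (\<lambda>j. u j ^ (p - 1)) [s..<Suc n])"

lemma top_monomial_Cons: "s \<le> n \<Longrightarrow> top_monomial s = u s ^ (p - 1) * top_monomial (Suc s)"
  unfolding top_monomial_def by (simp add: upt_conv_Cons del: upt_Suc)

text \<open>Part (b), second half: J_s annihilates top_monomial s from the left.  For x = b u_s + z
  with z \<in> J_(s+1): u_s u_s^(p-1) = 0, and z u_s^(p-1) \<in> J_(s+1) is killed by induction.\<close>
lemma Jset_annihilates_top: "1 \<le> s \<Longrightarrow> x \<in> Jset u n s \<Longrightarrow> x * top_monomial s = 0"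
proof (induction "Suc n - s" arbitrary: s x rule: less_induct)
  case less
  show ?case
  proof (cases "n < s")
    case True
    then show ?thesis using less.prems by (simp add: Jset_empty)
  next
    case False
    then have sn: "s \<le> n" by simp
    have IH: "z * top_monomial (Suc s) = 0" if "z \<in> Jset u n (Suc s)" for z
      using less sn that by (intro less.hyps) auto
    obtain b z where z: "z \<in> Jset u n (Suc s)" and x: "x = b * u s + z"
      using less.prems Jset_split[OF sn] by blast
    have "u s * top_monomial s = 0"
      using u_times_top_power[of s] less.prems sn by (simp add: top_monomial_Cons mult.assoc[symmetric])
    moreover have "z * top_monomial s = 0"
      using IH[OF Jset_rmult[OF _ z]] sn by (simp add: top_monomial_Cons mult.assoc[symmetric])
    ultimately show ?thesis unfolding x by (simp add: distrib_right mult.assoc)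
  qed
qed

text \<open>Ordered monomials u_1^(e 1) ... u_(s-1)^(e (s-1)) in the first s - 1 generators and their
  span.  The spanning argument shows A = lower_span s + J_s for s = 1, ..., n + 1.\<close>
definition lower_monomial :: "nat \<Rightarrow> (nat \<Rightarrow> nat) \<Rightarrow> 'a" where
  "lower_monomial s e = prod_list (map (\<lambda>j. u j ^ e j) [1..<s])"

definition lower_span :: "nat \<Rightarrow> 'a set" where
  "lower_span s = span (lower_monomial s ` exps p (s - 1))"

lemma lower_monomial_Suc: "1 \<le> s \<Longrightarrow> lower_monomial (Suc s) (e(s := m)) = lower_monomial s e * u s ^ m"
proof -
  assume s: "1 \<le> s"
  have "prod_list (map (\<lambda>j. u j ^ (if j = s then m else e j)) [Suc 0..<s])
      = prod_list (map (\<lambda>j. u j ^ e j) [Suc 0..<s])"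
    by (rule arg_cong[where f = prod_list], rule map_cong) auto
  then show ?thesis unfolding lower_monomial_def using s by simp
qed

lemma exps_update:
  assumes "1 \<le> s" "e \<in> exps p (s - 1)" "m < p"
  shows "e(s := m) \<in> exps p s"
proof -
  have e: "(j \<in> {1..s-1} \<longrightarrow> e j < p) \<and> (j \<notin> {1..s-1} \<longrightarrow> e j = 0)" for j
    using assms(2) unfolding exps_def by blast
  have "(j \<in> {1..s} \<longrightarrow> (e(s := m)) j < p) \<and> (j \<notin> {1..s} \<longrightarrow> (e(s := m)) j = 0)" for j
  proof (cases "j = s")
    case False
    then have "j \<in> {1..s} \<longleftrightarrow> j \<in> {1..s-1}" by auto
    then show ?thesis using e[of j] False by simp
  qed (use assms in simp)
  then show ?thesis unfolding exps_def by blast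
qed

lemma lower_span_times_power:
  assumes s: "1 \<le> s" and m: "m < p" and y: "y \<in> lower_span s"
  shows "y * u s ^ m \<in> lower_span (Suc s)"
  using y unfolding lower_span_def
proof (induction rule: span_induct_alt)
  case base
  then show ?case by (simp add: span_zero)
next
  case (step c b w)
  then obtain e where e: "e \<in> exps p (s - 1)" and b: "b = lower_monomial s e" by blast
  have "b * u s ^ m = lower_monomial (Suc s) (e(s := m))" using lower_monomial_Suc[OF s] b by simp
  then have "b * u s ^ m \<in> span (lower_monomial (Suc s) ` exps p (Suc s - 1))"
    using exps_update[OF s e m] by (auto intro: span_base)
  moreover have "(scale c b + w) * u s ^ m = scale c (b * u s ^ m) + w * u s ^ m"
    by (simp only: distrib_right scale_mult_left)
  ultimately show ?case using step by (simp add: span_add span_scale)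
qed

text \<open>A = k 1 + J_1, since k 1 + J_1 is a subalgebra containing all generators u_i.\<close>
lemma scalar_plus_J1: "\<exists>c z. z \<in> Jset u n 1 \<and> x = scale c 1 + z"
proof -
  define K where "K = {scale c 1 + z | c z. z \<in> Jset u n 1}"
  have J1: "z \<in> Jset u n 1 \<Longrightarrow> w * z \<in> Jset u n 1 \<and> z * w \<in> Jset u n 1" for z w
    using Jset_two_sided_ideal[of 1] unfolding two_sided_ideal_def by auto
  have "w \<in> K" if "w \<in> alg_gen scale (u ` {1..n})" for w
    using that
  proof (induction rule: alg_gen.induct)
    case (gen w)
    then have "w \<in> Jset u n 1" by (auto intro: Jset_gen)
    then show ?case unfolding K_def by force
  next
    case one
    have "1 = scale 1 1 + 0" by simp
    then show ?case unfolding K_def using Jset_zero by blast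
  next
    case (add w w')
    then obtain c z d z' where "z \<in> Jset u n 1" "z' \<in> Jset u n 1" "w = scale c 1 + z" "w' = scale d 1 + z'"
      unfolding K_def by blast
    then have "w + w' = scale (c + d) 1 + (z + z') \<and> z + z' \<in> Jset u n 1"
      by (simp add: Jset_add scale_left_distrib add_ac)
    then show ?case unfolding K_def by blast
  next
    case (mult w w')
    then obtain c z d z' where z: "z \<in> Jset u n 1" "z' \<in> Jset u n 1" and "w = scale c 1 + z" "w' = scale d 1 + z'"
      unfolding K_def by blast
    then have "w * w' = scale (c * d) 1 + (scale c 1 * z' + z * w')"
      by (simp add: distrib_left distrib_right scalar_mult add.assoc)
    moreover have "scale c 1 * z' + z * w' \<in> Jset u n 1" using J1 z by (simp add: Jset_add)
    ultimately show ?case unfolding K_def by blast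
  next
    case (scale w c)
    then obtain d z where z: "z \<in> Jset u n 1" and "w = scale d 1 + z" unfolding K_def by blast
    then have "scale c w = scale (c * d) 1 + scale c 1 * z"
      by (simp add: scale_right_distrib scale_as_left_mult[of c z])
    moreover have "scale c 1 * z \<in> Jset u n 1" using J1 z by simp
    ultimately show ?case unfolding K_def by blast
  qed
  then show ?thesis using generated unfolding K_def by blast
qed

lemma decomposition_base: "\<exists>y z. y \<in> lower_span 1 \<and> z \<in> Jset u n 1 \<and> x = y + z"
proof -
  obtain c z where z: "z \<in> Jset u n 1" and x: "x = scale c 1 + z"
    using scalar_plus_J1 by blast
  have "lower_monomial 1 (\<lambda>_. 0) = 1" "(\<lambda>_. 0) \<in> exps p 0"
    unfolding lower_monomial_def exps_def by simp_all
  then have "scale c 1 \<in> lower_span 1"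
    unfolding lower_span_def by (metis diff_self_eq_0 image_eqI span_base span_scale)
  then show ?thesis using z x by blast
qed

text \<open>Inductive step of the spanning argument: if A = lower_span s + J_s, then repeatedly
  expanding the coefficient of u_s^m via J_s = A u_s + J_(s+1) puts every x into
  lower_span (s+1) + A u_s^m + J_(s+1) for all m \<le> p; u_s^p = 0 finishes the step.\<close>
lemma peel_powers:
  assumes s: "1 \<le> s" "s \<le> n"
    and decomp: "\<And>x. \<exists>y z. y \<in> lower_span s \<and> z \<in> Jset u n s \<and> x = y + z"
  shows "m \<le> p \<Longrightarrow> \<exists>y w z. y \<in> lower_span (Suc s) \<and> z \<in> Jset u n (Suc s) \<and> x = y + w * u s ^ m + z"
proof (induction m)
  case 0
  show ?case
    by (intro exI[of _ 0] exI[of _ x]) (simp add: lower_span_def span_zero Jset_zero)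
next
  case (Suc m)
  then obtain y w z where y: "y \<in> lower_span (Suc s)" and z: "z \<in> Jset u n (Suc s)"
    and x: "x = y + w * u s ^ m + z" by auto
  obtain y' z' where y': "y' \<in> lower_span s" and z': "z' \<in> Jset u n s" and w: "w = y' + z'"
    using decomp by blast
  obtain b z'' where z'': "z'' \<in> Jset u n (Suc s)" and z'_eq: "z' = b * u s + z''"
    using z' Jset_split[OF s(2)] by blast
  have "x = (y + y' * u s ^ m) + b * u s ^ Suc m + (z + z'' * u s ^ m)"
    unfolding x w z'_eq by (simp add: distrib_right mult.assoc add_ac)
  moreover have "y + y' * u s ^ m \<in> lower_span (Suc s)"
    using Suc.prems y lower_span_times_power[OF s(1) _ y'] by (simp add: lower_span_def span_add)
  moreover have "z + z'' * u s ^ m \<in> Jset u n (Suc s)"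
    by (intro Jset_add z Jset_rmult z'') simp
  ultimately show ?case by blast
qed

lemma decomposition: "s \<le> n \<Longrightarrow> \<exists>y z. y \<in> lower_span (Suc s) \<and> z \<in> Jset u n (Suc s) \<and> x = y + z"
proof (induction s arbitrary: x)
  case 0
  then show ?case using decomposition_base by simp
next
  case (Suc s)
  then obtain y w z where "y \<in> lower_span (Suc (Suc s))" "z \<in> Jset u n (Suc (Suc s))"
    and "x = y + w * u (Suc s) ^ p + z"
    using peel_powers[of "Suc s" p x] by auto
  moreover have "u (Suc s) ^ p = 0" using Suc.prems by (intro u_nilpotent) auto
  ultimately show ?case by auto
qed

text \<open>Part (a), spanning: for s = n + 1 the ideal J_(n+1) is zero.\<close>
lemma ord_monomials_span: "span (ord_monomial u n ` exps p n) = UNIV"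
proof -
  have "lower_monomial (Suc n) = ord_monomial u n"
    unfolding lower_monomial_def ord_monomial_def by (simp add: fun_eq_iff)
  moreover have "x \<in> lower_span (Suc n)" for x
    using decomposition[of n x] by (auto simp: Jset_empty)
  ultimately show ?thesis unfolding lower_span_def by auto
qed

text \<open>Part (a): a spanning family of at most p^n = dim A vectors is a basis, and it has
  exactly p^n members, so the indexing by exponent vectors is injective.\<close>
lemma ord_monomials_basis:
  "\<not> dependent (ord_monomial u n ` exps p n) \<and> span (ord_monomial u n ` exps p n) = UNIV
   \<and> inj_on (ord_monomial u n) (exps p n)"
proof -
  let ?B = "ord_monomial u n ` exps p n"
  have fin: "finite (exps p n)" and card: "card (exps p n) = p ^ n" using exps_finite_card by auto
  obtain B where "B \<subseteq> ?B" and indep: "independent B" and "?B \<subseteq> span B"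
    by (rule maximal_independent_subset)
  then have "span B = UNIV" using ord_monomials_span span_mono[of ?B "span B"] span_span[of B] by auto
  then have "card B = p ^ n" using basis_card_eq_dim[of B UNIV] indep dim_A by auto
  moreover have "card B \<le> card ?B" "card ?B \<le> p ^ n"
    using \<open>B \<subseteq> ?B\<close> fin card card_image_le[OF fin] by (auto intro: card_mono)
  ultimately have "card B = card ?B" "card ?B = card (exps p n)" using card by auto
  then have "B = ?B" "inj_on (ord_monomial u n) (exps p n)"
    using \<open>B \<subseteq> ?B\<close> fin by (simp_all add: card_subset_eq eq_card_imp_inj_on)
  then show ?thesis using indep ord_monomials_span by simp
qed

text \<open>Each top_monomial m with 1 \<le> m \<le> n is an ordered monomial, hence a basis vector.\<close>
lemma top_monomial_nonzero:
  assumes "1 \<le> m" "m \<le> n"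
  shows "top_monomial m \<noteq> 0"
proof -
  define e where "e j = (if m \<le> j \<and> j \<le> n then p - 1 else 0)" for j
  have e: "e \<in> exps p n"
    unfolding exps_def e_def using assms p_ge_2 by simp
  have "[1..<Suc n] = [1..<m] @ [m..<Suc n]"
    using assms upt_add_eq_append[of 1 m "Suc n - m"] by simp
  then have factor: "ord_monomial u n e
      = prod_list (map (\<lambda>j. u j ^ e j) [1..<m]) * prod_list (map (\<lambda>j. u j ^ e j) [m..<Suc n])"
    unfolding ord_monomial_def by (simp only: map_append prod_list.append)
  have lower: "map (\<lambda>j. u j ^ e j) [1..<m] = map (\<lambda>_. 1) [1..<m]"
    by (rule map_cong) (auto simp: e_def)
  have upper: "map (\<lambda>j. u j ^ e j) [m..<Suc n] = map (\<lambda>j. u j ^ (p - 1)) [m..<Suc n]"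
    by (rule map_cong) (auto simp: e_def)
  have "ord_monomial u n e = top_monomial m"
    unfolding factor lower upper top_monomial_def
    by (simp only: map_replicate_const prod_list_replicate power_one mult_1_left)
  moreover have "0 \<notin> ord_monomial u n ` exps p n"
    using ord_monomials_basis by (metis dependent_zero)
  ultimately show ?thesis using e by (metis image_eqI)
qed

lemma leading_term:
  assumes v: "v = (\<Sum>j\<in>{1..n}. scale (a j) (u j))" and m: "1 \<le> m" "m \<le> n"
    and below: "\<And>j. 1 \<le> j \<Longrightarrow> j < m \<Longrightarrow> a j = 0"
  shows "\<exists>r \<in> Jset u n (Suc m). v = scale (a m) (u m) + r"
proof
  have "scale (a j) (u j) \<in> Jset u n (Suc m)" if "j \<in> {Suc m..n}" for j
    using Jset_lmult[OF Jset_gen[OF that]] scale_as_left_mult[of "a j" "u j"] by simp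
  then show "(\<Sum>j\<in>{Suc m..n}. scale (a j) (u j)) \<in> Jset u n (Suc m)"
    by (intro Jset_sum) auto
  have "v = (\<Sum>j\<in>{1..<m} \<union> {m..n}. scale (a j) (u j))"
    unfolding v using m by (intro sum.cong) auto
  also have "\<dots> = (\<Sum>j\<in>{1..<m}. scale (a j) (u j)) + (\<Sum>j\<in>{m..n}. scale (a j) (u j))"
    by (rule sum.union_disjoint) auto
  also have "(\<Sum>j\<in>{1..<m}. scale (a j) (u j)) = 0" using below by (intro sum.neutral) auto
  finally show "v = scale (a m) (u m) + (\<Sum>j\<in>{Suc m..n}. scale (a j) (u j))"
    using m by (simp add: sum.atLeast_Suc_atMost)
qed

lemma power_leading_term:
  assumes "1 \<le> m" and r: "r \<in> Jset u n (Suc m)"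
  shows "\<exists>r' \<in> Jset u n (Suc m). (scale c (u m) + r) ^ k = scale (c ^ k) (u m ^ k) + r'"
proof (induction k)
  case 0
  then show ?case using Jset_zero by force
next
  case (Suc k)
  define v where "v = scale c (u m) + r"
  define lead where "lead = scale (c ^ k) (u m ^ k)"
  obtain r' where r': "r' \<in> Jset u n (Suc m)" and vk: "v ^ k = lead + r'"
    using Suc.IH unfolding v_def lead_def by blast
  have "v ^ Suc k = lead * scale c (u m) + (lead * r + r' * v)"
    unfolding power_Suc2 vk by (simp add: v_def distrib_left distrib_right add.assoc)
  also have "lead * scale c (u m) = scale (c ^ Suc k) (u m ^ Suc k)"
    unfolding lead_def scale_times_scale by (simp add: mult.commute[of _ c] power_commutes)
  finally have "v ^ Suc k = scale (c ^ Suc k) (u m ^ Suc k) + (lead * r + r' * v)" .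
  moreover have "lead * r + r' * v \<in> Jset u n (Suc m)"
    using r r' assms(1) by (simp add: Jset_add Jset_lmult Jset_rmult)
  ultimately show ?case unfolding v_def by blast
qed

text \<open>Part (c), main point: if v = \<Sum> a_j u_j has a nonzero coefficient a_i with i < n, then
  v^(p-1) u_n^(p-1) \<noteq> 0.  With m the least index of a nonzero coefficient,
  v^(p-1) \<equiv> a_m^(p-1) u_m^(p-1) modulo J_(m+1), and J_(m+1) annihilates top_monomial (m+1),
  so multiplying by the (commuting) rest of top_monomial (m+1) gives a_m^(p-1) top_monomial m.\<close>
lemma combination_top_power_nonzero:
  assumes v: "v = (\<Sum>j\<in>{1..n}. scale (a j) (u j))" and ex: "\<exists>i\<in>{1..<n}. a i \<noteq> 0"
  shows "v ^ (p - 1) * u n ^ (p - 1) \<noteq> 0"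
proof
  assume zero: "v ^ (p - 1) * u n ^ (p - 1) = 0"
  define m where "m = (LEAST i. 1 \<le> i \<and> a i \<noteq> 0)"
  obtain i where i: "i \<in> {1..<n}" "a i \<noteq> 0" using ex by blast
  then have m: "1 \<le> m" "a m \<noteq> 0" "m \<le> i"
    unfolding m_def using LeastI[of "\<lambda>i. 1 \<le> i \<and> a i \<noteq> 0" i] Least_le[of _ i] by auto
  then have mn: "m < n" using i by simp
  have "a j = 0" if "1 \<le> j" "j < m" for j
    using not_less_Least[of j "\<lambda>i. 1 \<le> i \<and> a i \<noteq> 0"] that unfolding m_def by auto
  then obtain r where r: "r \<in> Jset u n (Suc m)" and "v = scale (a m) (u m) + r"
    using leading_term[OF v m(1)] mn by fastforce
  then obtain r' where r': "r' \<in> Jset u n (Suc m)"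
    and vp: "v ^ (p - 1) = scale (a m ^ (p - 1)) (u m ^ (p - 1)) + r'"
    using power_leading_term[OF m(1) r] by blast
  define Q where "Q = prod_list (map (\<lambda>j. u j ^ (p - 1)) [Suc m..<n])"
  have "top_monomial (Suc m) = Q * u n ^ (p - 1)" unfolding top_monomial_def Q_def using mn by simp
  also have "\<dots> = u n ^ (p - 1) * Q" by (rule power_commuting_commutes[OF u_n_central, symmetric])
  finally have "v ^ (p - 1) * top_monomial (Suc m) = v ^ (p - 1) * u n ^ (p - 1) * Q"
    by (simp add: mult.assoc)
  then have "0 = v ^ (p - 1) * top_monomial (Suc m)" using zero by simp
  also have "\<dots> = scale (a m ^ (p - 1)) (top_monomial m)"
    unfolding vp distrib_right using Jset_annihilates_top[OF _ r'] top_monomial_Cons[of m] mn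
    by (simp flip: scale_mult_left)
  finally show False using top_monomial_nonzero[of m] m mn by simp
qed

lemma combination_subalgebra:
  assumes v: "v = (\<Sum>j\<in>{1..n}. scale (a j) (u j))" and ex: "\<exists>i\<in>{1..<n}. a i \<noteq> 0"
    and v_nilpotent: "v ^ p = 0"
  shows "v ^ (p - 1) * u n ^ (p - 1) \<noteq> 0 \<and>
        v ^ (p - 1) \<notin> {x * u n | x. True} \<and>
        (\<forall>f g. eval2 scale v (u n) (f + g) = eval2 scale v (u n) f + eval2 scale v (u n) g) \<and>
        (\<forall>f g. eval2 scale v (u n) (f * g) = eval2 scale v (u n) f * eval2 scale v (u n) g) \<and>
        eval2 scale v (u n) 1 = 1 \<and>
        eval2 scale v (u n) var_s = v \<and> eval2 scale v (u n) var_t = u n \<and>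
        range (eval2 scale v (u n)) = alg_gen scale {v, u n} \<and>
        {f. eval2 scale v (u n) f = 0} = ideal_gen {var_s ^ p, var_t ^ p}"
proof -
  have nonzero: "v ^ (p - 1) * u n ^ (p - 1) \<noteq> 0"
    by (rule combination_top_power_nonzero[OF v ex])
  have un_nilpotent: "u n ^ p = 0" using n_gt_1 by (intro u_nilpotent) auto
  have "v ^ (p - 1) \<noteq> x * u n" for x
  proof
    assume "v ^ (p - 1) = x * u n"
    then have "v ^ (p - 1) * u n ^ (p - 1) = x * u n ^ Suc (p - 1)" by (simp add: mult.assoc)
    then show False using nonzero un_nilpotent p_ge_2 by simp
  qed
  moreover have vu: "v * u n = u n * v" using u_n_central by simp
  ultimately show ?thesis
    using nonzero eval2_add eval2_mult[OF vu] eval2_1 eval2_var_s eval2_var_t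
      eval2_range[OF vu] eval2_kernel[OF vu v_nilpotent un_nilpotent nonzero] by blast
qed

end

theorem lemma4p2:
  fixes scale :: "'k::field \<Rightarrow> 'a::ring_1 \<Rightarrow> 'a"
    and p n :: nat and u :: "nat \<Rightarrow> 'a"
  assumes alg: "k_algebra scale"
    and closed: "alg_closed_field TYPE('k)"
    and prime_p: "prime p" and charp: "CHAR('k) = p"
    and hyp: "H1 scale p n u"
  shows
    "(\<not> module.dependent scale (ord_monomial u n ` exps p n) \<and>
      module.span scale (ord_monomial u n ` exps p n) = UNIV \<and>
      inj_on (ord_monomial u n) (exps p n))
   \<and> (\<forall>s\<in>{1..n}. two_sided_ideal (Jset u n s) \<and>
        (\<forall>x\<in>Jset u n s. x * prod_list (map (\<lambda>j. u j ^ (p - 1)) [s..<Suc n]) = 0))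
   \<and> (\<forall>a::nat \<Rightarrow> 'k. \<forall>v. v = (\<Sum>j\<in>{1..n}. scale (a j) (u j)) \<longrightarrow>
        (\<exists>i\<in>{1..<n}. a i \<noteq> 0) \<longrightarrow> v ^ p = 0 \<longrightarrow>
        v ^ (p - 1) * u n ^ (p - 1) \<noteq> 0 \<and>
        v ^ (p - 1) \<notin> {x * u n | x. True} \<and>
        (\<forall>f g. eval2 scale v (u n) (f + g) = eval2 scale v (u n) f + eval2 scale v (u n) g) \<and>
        (\<forall>f g. eval2 scale v (u n) (f * g) = eval2 scale v (u n) f * eval2 scale v (u n) g) \<and>
        eval2 scale v (u n) 1 = 1 \<and>
        eval2 scale v (u n) var_s = v \<and> eval2 scale v (u n) var_t = u n \<and>
        range (eval2 scale v (u n)) = alg_gen scale {v, u n} \<and>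
        {f. eval2 scale v (u n) f = 0} = ideal_gen {var_s ^ p, var_t ^ p})"
proof -
  have "H1_algebra scale p n u"
    using k_algebra_imp_k_alg[OF alg] prime_ge_2_nat[OF prime_p] hyp
    by (simp add: H1_algebra_def H1_algebra_axioms_def)
  then interpret H1_algebra scale p n u .
  have part_b: "\<forall>s\<in>{1..n}. two_sided_ideal (Jset u n s) \<and>
      (\<forall>x\<in>Jset u n s. x * prod_list (map (\<lambda>j. u j ^ (p - 1)) [s..<Suc n]) = 0)"
  proof (intro ballI conjI)
    fix s assume "s \<in> {1..n}"
    then have "1 \<le> s" by simp
    then show "two_sided_ideal (Jset u n s)" by (rule Jset_two_sided_ideal)
    show "x * prod_list (map (\<lambda>j. u j ^ (p - 1)) [s..<Suc n]) = 0" if "x \<in> Jset u n s" for x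
      using Jset_annihilates_top[OF \<open>1 \<le> s\<close> that] unfolding top_monomial_def .
  qed
  show ?thesis
    using ord_monomials_basis part_b
    by (intro combination_subalgebra conjI allI impI) (assumption | blast)+
qed

end
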